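(* A sequence $a=(a_1,\dots,a_d)\in\mathbb{R}^d$ is a Nuij sequence with a universal determinantal representation if and only if there exist $\alpha,\beta\in\mathbb{R}$ such that $$a_i=\frac{1}{i!}\,t_{\alpha,\beta}(i)=\frac{1}{i!}(\alpha-\beta)^{i-1}\big(\alpha+(i-1)\beta\big),\qquad i=1,\dots,d.$$
   Context: A polynomial in $\mathbb{R}[z]$ is hyperbolic if all its roots are real. A sequence $a\in\mathbb{R}^d$ is a Nuij sequence if for every hyperbolic $p\in\mathbb{R}[z]$ of degree $d$, $p_a(z,s):=p(z)+\sum_{k=1}^d a_k s^k p^{(k)}(z)$ is hyperbolic for all $s\in\mathbb{R}$. A Nuij sequence $a$ admits a universal determinantal representation if there exists a real symmetric $d\times d$ matrix $A_a$ such that for every monic hyperbolic polynomial $p(z)=(z+\lambda_1)\cdots(z+\lambda_d)$ of degree $d$ one has $p_a(z,s)=\det(zI+D+sA_a)$, where $D$ is the diagonal matrix with diagonal entries $\lambda_1,\dots,\lambda_d$ in an arbitrary order. For $\alpha,\beta\in\mathbb{R}$ and $i\ge1$, $t_{\alpha,\beta}(i)$ denotes the determinant of the $i\times i$ matrix with all diagonal entries $\alpha$ and all off-diagonal entries $\beta$, which equals $(\alpha-\beta)^{i-1}(\alpha+(i-1)\beta)$. *)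

theory Defs
  imports "Jordan_Normal_Form.Determinant" "HOL-Computational_Algebra.Polynomial"
begin

definition hyperbolic :: "real poly \<Rightarrow> bool" where
  "hyperbolic p \<longleftrightarrow> (\<forall>z::complex. poly (map_poly complex_of_real p) z = 0 \<longrightarrow> z \<in> \<real>)"

text \<open>p_a(z,s) for fixed s, as a polynomial in z; the sequence a is indexed by 1..d.\<close>
definition nuij_pert :: "nat \<Rightarrow> (nat \<Rightarrow> real) \<Rightarrow> real poly \<Rightarrow> real \<Rightarrow> real poly" where
  "nuij_pert d a p s = p + (\<Sum>k=1..d. smult (a k * s ^ k) ((pderiv ^^ k) p))"

definition nuij_seq :: "nat \<Rightarrow> (nat \<Rightarrow> real) \<Rightarrow> bool" where
  "nuij_seq d a \<longleftrightarrow>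
     (\<forall>p. degree p = d \<and> hyperbolic p \<longrightarrow> (\<forall>s. hyperbolic (nuij_pert d a p s)))"

text \<open>Universal determinantal representation: a real symmetric d x d matrix A with
  p_a(z,s) = det(zI + D + sA) for every monic hyperbolic p = prod (z + lambda_i),
  D = diag(lambda_1..lambda_d) in any order (we quantify over all tuples lambda).\<close>
definition univ_det_rep :: "nat \<Rightarrow> (nat \<Rightarrow> real) \<Rightarrow> bool" where
  "univ_det_rep d a \<longleftrightarrow>
     (\<exists>A \<in> carrier_mat d d. transpose_mat A = A \<and>
        (\<forall>lam :: nat \<Rightarrow> real. \<forall>z s.
           poly (nuij_pert d a (\<Prod>i<d. [:lam i, 1:]) s) z =
           det (z \<cdot>\<^sub>m 1\<^sub>m d + mat d d (\<lambda>(i,j). if i = j then lam i else 0) + s \<cdot>\<^sub>m A)))"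

definition t_ab :: "real \<Rightarrow> real \<Rightarrow> nat \<Rightarrow> real" where
  "t_ab \<alpha> \<beta> i = det (mat i i (\<lambda>(j,k). if j = k then \<alpha> else \<beta>))"

end

theory Submission
  imports Defs "Jordan_Normal_Form.Char_Poly"
begin

text \<open>If \<open>a\<^sub>i = t\<^sub>\<alpha>\<^sub>,\<^sub>\<beta>(i)/i!\<close>, the Taylor expansion collapses the perturbation to
  \<open>p(z + s(\<alpha>-\<beta>)) + s\<beta> p'(z + s(\<alpha>-\<beta>))\<close>. This polynomial is hyperbolic because the logarithmic
  derivative \<open>p'/p = \<Sum> 1/(u - \<lambda>\<^sub>i)\<close> has nonzero imaginary part off the real axis, and its value
  at \<open>z\<close> is \<open>det (zI + D + sA)\<close> for the matrix \<open>A\<close> with diagonal \<open>\<alpha>\<close> and off-diagonal entries \<open>\<beta>\<close>,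
  by the determinant formula for a diagonal matrix plus a constant matrix.
  Conversely, if \<open>A\<close> represents \<open>a\<close>, choosing \<open>\<lambda>\<close> with exactly \<open>k\<close> zero entries and letting
  \<open>s \<rightarrow> 0\<close> shows that every \<open>k \<times> k\<close> principal minor of \<open>A\<close> equals \<open>k! a\<^sub>k\<close>. The minors of order
  1, 2, 3 force a constant diagonal \<open>\<alpha>\<close>, off-diagonal entries of constant square and a constant
  product around every triangle; hence \<open>A = \<Sigma> T \<Sigma>\<close> with \<open>\<Sigma>\<close> a diagonal sign matrix and \<open>T\<close>
  constant off the diagonal, and the leading minors of \<open>A\<close> are those of \<open>T\<close>.\<close>

section \<open>Determinants\<close>

lemma det_mat_eq_sum_permutes:
  "det (mat n n f) = (\<Sum>p\<in>{p. p permutes {0..<n}}. of_int (sign p) * (\<Prod>i=0..<n. f (i, p i)))"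
proof -
  have "det (mat n n f) = (\<Sum>p\<in>{p. p permutes {0..<n}}. of_int (sign p) * (\<Prod>i=0..<n. mat n n f $$ (i, p i)))"
    by (rule det_def') simp
  also have "\<dots> = (\<Sum>p\<in>{p. p permutes {0..<n}}. of_int (sign p) * (\<Prod>i=0..<n. f (i, p i)))"
  proof (rule sum.cong[OF refl])
    fix p assume "p \<in> {p. p permutes {0..<n}}"
    then have "\<And>i. i < n \<Longrightarrow> p i < n" using permutes_in_image by fastforce
    then show "of_int (sign p) * (\<Prod>i=0..<n. mat n n f $$ (i, p i)) = of_int (sign p) * (\<Prod>i=0..<n. f (i, p i))"
      by (intro arg_cong[of _ _ "\<lambda>x. _ * x"] prod.cong) auto
  qed
  finally show ?thesis .
qed

lemma det_mat_rescale:
  fixes g :: "nat \<times> nat \<Rightarrow> 'a::comm_ring_1"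
  shows "det (mat n n (\<lambda>(i,j). \<sigma> i * \<sigma> j * g (i,j))) = (\<Prod>i=0..<n. \<sigma> i)^2 * det (mat n n g)"
proof -
  have "of_int (sign p) * (\<Prod>i=0..<n. \<sigma> i * \<sigma> (p i) * g (i, p i)) =
       (\<Prod>i=0..<n. \<sigma> i)^2 * (of_int (sign p) * (\<Prod>i=0..<n. g (i, p i)))"
    if "p permutes {0..<n}" for p
  proof -
    have "(\<Prod>i=0..<n. \<sigma> (p i)) = (\<Prod>i=0..<n. \<sigma> i)"
      using prod.permute[OF that, of \<sigma>] by (simp add: o_def)
    then show ?thesis by (simp add: prod.distrib power2_eq_square algebra_simps)
  qed
  then show ?thesis
    by (simp add: det_mat_eq_sum_permutes sum_distrib_left)
qed

lemma det_mat_permute_rows_cols: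
  fixes M :: "'a::comm_ring_1 mat"
  assumes M: "M \<in> carrier_mat d d" and p: "\<pi> permutes {0..<d}"
  shows "det (mat d d (\<lambda>(i,j). M $$ (\<pi> i, \<pi> j))) = det M"
proof -
  define M1 where "M1 = mat d d (\<lambda>(i,j). M $$ (\<pi> i, j))"
  have M1C: "M1 \<in> carrier_mat d d" by (simp add: M1_def)
  have d1: "det M1 = of_int (sign \<pi>) * det M" unfolding M1_def by (rule det_permute_rows[OF M p])
  define M2 where "M2 = mat d d (\<lambda>(i,j). (transpose_mat M1) $$ (\<pi> i, j))"
  have d2: "det M2 = of_int (sign \<pi>) * det (transpose_mat M1)" unfolding M2_def
    by (rule det_permute_rows[OF _ p]) (simp add: M1C)
  have pi: "\<And>i. i < d \<Longrightarrow> \<pi> i < d" using p permutes_in_image by fastforce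
  have "mat d d (\<lambda>(i,j). M $$ (\<pi> i, \<pi> j)) = transpose_mat M2"
    by (rule eq_matI, auto simp: M2_def M1_def pi)
  moreover have "M2 \<in> carrier_mat d d" by (simp add: M2_def)
  ultimately have "det (mat d d (\<lambda>(i,j). M $$ (\<pi> i, \<pi> j))) = det M2"
    by (simp add: det_transpose)
  also have "\<dots> = of_int (sign \<pi>) * of_int (sign \<pi>) * det M"
    using d2 d1 det_transpose[OF M1C] by simp
  also have "of_int (sign \<pi>) * of_int (sign \<pi>) = (1::'a)"
    by (simp add: sign_def)
  finally show ?thesis by simp
qed

lemma det_mat_2: "det (mat 2 2 f) = f (0,0) * f (1,1) - f (0,1) * f (1,0)"
proof -
  have "det (mat 2 2 f) = (\<Sum>j<2. mat 2 2 f $$ (0,j) * cofactor (mat 2 2 f) 0 j)"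
    by (rule laplace_expansion_row) simp_all
  then show ?thesis
    by (simp add: numeral_2_eq_2 cofactor_def mat_delete_def det_single)
qed

lemma det_mat_3: "det (mat 3 3 f) =
   f (0,0) * (f (1,1) * f (2,2) - f (1,2) * f (2,1))
 - f (0,1) * (f (1,0) * f (2,2) - f (1,2) * f (2,0))
 + f (0,2) * (f (1,0) * f (2,1) - f (1,1) * f (2,0))"
proof -
  have minor: "mat_delete (mat 3 3 f) 0 j = mat 2 2 (\<lambda>(i',j'). f (Suc i', if j' < j then j' else Suc j'))" for j
    by (rule eq_matI) (auto simp: mat_delete_def)
  have "det (mat 3 3 f) = (\<Sum>j<3. mat 3 3 f $$ (0,j) * cofactor (mat 3 3 f) 0 j)"
    by (rule laplace_expansion_row) simp_all
  also have "\<dots> = (\<Sum>j<3. f (0,j) * ((-1)^j * det (mat 2 2 (\<lambda>(i',j'). f (Suc i', if j' < j then j' else Suc j')))))"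
    by (rule sum.cong, auto simp: cofactor_def minor)
  finally show ?thesis
    by (simp add: det_mat_2[unfolded numeral_2_eq_2] numeral_3_eq_3 numeral_2_eq_2 algebra_simps)
qed

lemma det_last_row_ones:
  fixes w :: "nat \<Rightarrow> 'a::comm_ring_1"
  shows "det (mat (Suc n) (Suc n) (\<lambda>(i,j). if i = n then 1 else (if i = j then w i else 0) + c))
       = (\<Prod>i<n. w i)"
proof -
  \<comment> \<open>subtracting \<open>c\<close> times the last row from the first \<open>m\<close> rows leaves a lower triangular matrix\<close>
  define N where "N m = mat (Suc n) (Suc n) (\<lambda>(i,j). if i = n then 1 else
      (if i = j then w i else 0) + (if i < m then 0 else c))" for m
  have step: "det (N (Suc m)) = det (N m)" if "m < n" for m
  proof -
    have "N (Suc m) = addrow (-c) m n (N m)"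
      by (rule eq_matI, insert that, auto simp: N_def mat_addrow_def)
    moreover have "det (addrow (-c) m n (N m)) = det (N m)"
      by (rule det_addrow[of _ "Suc n"], insert that, auto simp: N_def)
    ultimately show ?thesis by simp
  qed
  have "m \<le> n \<Longrightarrow> det (N m) = det (N 0)" for m
    by (induction m) (auto simp: step)
  moreover have "det (N n) = prod_list (diag_mat (N n))"
    by (rule det_lower_triangular[of "Suc n"], auto simp: N_def)
  moreover have "prod_list (diag_mat (N n)) = (\<Prod>i<n. w i)"
    unfolding prod_list_diag_prod by (simp add: N_def atLeast0LessThan lessThan_Suc)
  moreover have "N 0 = mat (Suc n) (Suc n) (\<lambda>(i,j). if i = n then 1 else (if i = j then w i else 0) + c)"
    by (rule eq_matI, auto simp: N_def)
  ultimately show ?thesis by (metis order_refl)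
qed

lemma det_diag_plus_const:
  fixes w :: "nat \<Rightarrow> 'a::comm_ring_1"
  shows "det (mat n n (\<lambda>(i,j). (if i = j then w i else 0) + c))
     = (\<Prod>i<n. w i) + c * (\<Sum>i<n. \<Prod>j\<in>{..<n}-{i}. w j)"
proof (induction n)
  case 0
  then show ?case by (simp add: det_def)
next
  case (Suc n)
  define M where "M = mat (Suc n) (Suc n) (\<lambda>(i,j). (if i = j then w i else 0) + c)"
  define N where "N = mat (Suc n) (Suc n) (\<lambda>(i,j). if i = n then 1 else (if i = j then w i else 0) + c)"
  have MC: "M \<in> carrier_mat (Suc n) (Suc n)" and NC: "N \<in> carrier_mat (Suc n) (Suc n)"
    by (auto simp: M_def N_def)
  have "det M = (\<Sum>j<Suc n. M $$ (n,j) * cofactor M n j)"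
    by (rule laplace_expansion_row[OF MC], simp)
  also have "\<dots> = (\<Sum>j<Suc n. ((if n = j then w n else 0) + c) * cofactor M n j)"
    by (rule sum.cong, auto simp: M_def)
  also have "\<dots> = w n * cofactor M n n + c * (\<Sum>j<Suc n. cofactor M n j)"
    by (simp add: distrib_right distrib_left sum.distrib sum_distrib_left)
  also have "cofactor M n n = det (mat n n (\<lambda>(i,j). (if i = j then w i else 0) + c))"
  proof -
    have "mat_delete M n n = mat n n (\<lambda>(i,j). (if i = j then w i else 0) + c)"
      by (rule eq_matI, auto simp: M_def mat_delete_def)
    then show ?thesis by (simp add: cofactor_def)
  qed
  also have "(\<Sum>j<Suc n. cofactor M n j) = det N"
  proof -
    have "det N = (\<Sum>j<Suc n. N $$ (n,j) * cofactor N n j)"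
      by (rule laplace_expansion_row[OF NC], simp)
    also have "\<dots> = (\<Sum>j<Suc n. cofactor M n j)"
    proof (rule sum.cong[OF refl])
      fix j assume "j \<in> {..<Suc n}"
      have "mat_delete N n j = mat_delete M n j"
        by (rule eq_matI, auto simp: M_def N_def mat_delete_def)
      then show "N $$ (n,j) * cofactor N n j = cofactor M n j"
        using \<open>j \<in> _\<close> by (simp add: cofactor_def N_def)
    qed
    finally show ?thesis by simp
  qed
  also have "det N = (\<Prod>i<n. w i)" unfolding N_def by (rule det_last_row_ones)
  finally have eq: "det M = w n * ((\<Prod>i<n. w i) + c * (\<Sum>i<n. \<Prod>j\<in>{..<n}-{i}. w j)) + c * (\<Prod>i<n. w i)"
    using Suc by simp
  have "(\<Sum>i<n. \<Prod>j\<in>{..<Suc n}-{i}. w j) = (\<Sum>i<n. w n * (\<Prod>j\<in>{..<n}-{i}. w j))"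
  proof (rule sum.cong[OF refl])
    fix i assume "i \<in> {..<n}"
    then have "{..<Suc n} - {i} = insert n ({..<n} - {i})" by auto
    then show "(\<Prod>j\<in>{..<Suc n}-{i}. w j) = w n * (\<Prod>j\<in>{..<n}-{i}. w j)" by simp
  qed
  moreover have "{..<Suc n} - {n} = {..<n}" by auto
  ultimately have "(\<Sum>i<Suc n. \<Prod>j\<in>{..<Suc n}-{i}. w j) = (\<Sum>i<n. w n * (\<Prod>j\<in>{..<n}-{i}. w j)) + (\<Prod>i<n. w i)"
    by simp
  then show ?case using eq unfolding M_def
    by (simp add: algebra_simps sum_distrib_left lessThan_Suc)
qed

definition diag_offdiag_mat :: "nat \<Rightarrow> real \<Rightarrow> real \<Rightarrow> real mat" where
  "diag_offdiag_mat n \<alpha> \<beta> = mat n n (\<lambda>(i,j). if i = j then \<alpha> else \<beta>)"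

lemma t_ab_eq:
  assumes "1 \<le> i"
  shows "t_ab \<alpha> \<beta> i = (\<alpha>-\<beta>)^(i-1) * (\<alpha> + (real i - 1)*\<beta>)"
proof -
  obtain m where i: "i = Suc m" using assms by (cases i) auto
  have "t_ab \<alpha> \<beta> i = det (mat i i (\<lambda>(j,k). (if j = k then \<alpha>-\<beta> else 0) + \<beta>))"
    unfolding t_ab_def by (rule arg_cong[of _ _ det], rule eq_matI, auto)
  also have "\<dots> = (\<alpha>-\<beta>)^i + \<beta> * (real i * (\<alpha>-\<beta>)^(i-1))"
    by (subst det_diag_plus_const) simp
  also have "\<dots> = (\<alpha>-\<beta>)^(i-1) * (\<alpha> + (real i - 1)*\<beta>)"
    unfolding i by (simp add: algebra_simps)
  finally show ?thesis .
qed

section \<open>Taylor expansion and the shape of the perturbation\<close>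

lemma degree_pderiv_funpow: "degree ((pderiv ^^ k) (p::real poly)) = degree p - k"
  by (induction k) (auto simp: degree_pderiv)

lemma pderiv_funpow_eq_0: "degree (p::real poly) < k \<Longrightarrow> (pderiv ^^ k) p = 0"
proof -
  assume "degree p < k"
  then obtain m where k: "k = Suc m" and "degree p \<le> m" by (cases k) auto
  then have "degree ((pderiv ^^ m) p) = 0" by (simp add: degree_pderiv_funpow)
  then show ?thesis using k by (simp add: pderiv_eq_0_iff)
qed

lemma coeff_pderiv_funpow:
  "fact n * coeff ((pderiv ^^ j) (p::real poly)) n = fact (n + j) * coeff p (n + j)"
proof (induction j arbitrary: p n)
  case 0 then show ?case by simp
next
  case (Suc j)
  have "fact n * coeff ((pderiv ^^ Suc j) p) n = fact (n + j) * coeff (pderiv p) (n + j)"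
    using Suc.IH by (simp add: funpow_swap1)
  also have "\<dots> = fact (n + Suc j) * coeff p (n + Suc j)"
    by (simp add: coeff_pderiv algebra_simps)
  finally show ?case .
qed

lemma poly_pderiv_funpow_0: "poly ((pderiv ^^ j) (p::real poly)) 0 = fact j * coeff p j"
  using coeff_pderiv_funpow[of 0 j p] by (simp add: poly_0_coeff_0)

lemma poly_taylor:
  fixes p :: "real poly"
  assumes "degree p \<le> d"
  shows "poly p (z + h) = (\<Sum>k\<le>d. poly ((pderiv ^^ k) p) z * h ^ k / fact k)"
proof -
  define diff where "diff m x = poly ((pderiv ^^ m) p) (z + x)" for m x
  have D: "\<forall>m x. DERIV (diff m) x :> diff (Suc m) x"
    unfolding diff_def by (auto intro!: derivative_eq_intros)
  have D0: "diff 0 = (\<lambda>x. poly p (z + x))" by (rule ext) (simp add: diff_def)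
  from Maclaurin_all_le[OF D0 D, of h "Suc d"]
  obtain t where "poly p (z + h) = (\<Sum>m<Suc d. diff m 0 / fact m * h ^ m) + diff (Suc d) t / fact (Suc d) * h ^ Suc d"
    by blast
  moreover have "diff (Suc d) t = 0" unfolding diff_def using assms
    by (subst pderiv_funpow_eq_0) auto
  ultimately show ?thesis by (simp add: diff_def lessThan_Suc_atMost)
qed

lemma poly_nuij_pert_0:
  "poly (nuij_pert d a p s) 0 = coeff p 0 + (\<Sum>j=1..d. a j * s ^ j * (fact j * coeff p j))"
  by (simp add: nuij_pert_def poly_sum poly_pderiv_funpow_0 poly_0_coeff_0[of p])

definition t_coeff :: "real \<Rightarrow> real \<Rightarrow> nat \<Rightarrow> real" where
  "t_coeff \<alpha> \<beta> i = (\<alpha> - \<beta>) ^ (i - 1) * (\<alpha> + (real i - 1) * \<beta>) / fact i"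

text \<open>The \<open>k\<close>-th term of the perturbation splits into the \<open>k\<close>-th Taylor term of a shift by
  \<open>s(\<alpha>-\<beta>)\<close> and \<open>s\<beta>\<close> times the \<open>(k-1)\<close>-st one.\<close>

lemma t_coeff_Suc_mult_power:
  "t_coeff \<alpha> \<beta> (Suc m) * s ^ Suc m
     = (s * (\<alpha> - \<beta>)) ^ Suc m / fact (Suc m) + s * \<beta> * ((s * (\<alpha> - \<beta>)) ^ m / fact m)"
proof -
  have "t_coeff \<alpha> \<beta> (Suc m) = (\<alpha> - \<beta>) ^ m * ((\<alpha> - \<beta>) + real (Suc m) * \<beta>) / fact (Suc m)"
    by (simp add: t_coeff_def algebra_simps)
  also have "\<dots> = (\<alpha> - \<beta>) ^ Suc m / fact (Suc m) + (\<alpha> - \<beta>) ^ m * \<beta> / fact m"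
    unfolding fact_Suc[of m] by (simp add: add_divide_distrib distrib_left del: of_nat_Suc)
  finally show ?thesis unfolding power_mult_distrib by (simp add: algebra_simps)
qed

lemma poly_pderiv_taylor:
  fixes p :: "real poly"
  assumes deg: "degree p \<le> d"
  shows "poly (pderiv p) (z + h) = (\<Sum>k=1..d. poly ((pderiv ^^ k) p) z * h ^ (k - 1) / fact (k - 1))"
proof -
  have "poly (pderiv p) (z + h) = (\<Sum>k\<le>d. poly ((pderiv ^^ Suc k) p) z * h ^ k / fact k)"
    using poly_taylor[of "pderiv p" d z h] deg by (simp add: degree_pderiv funpow_swap1)
  also have "\<dots> = (\<Sum>k<d. poly ((pderiv ^^ Suc k) p) z * h ^ k / fact k)"
    using pderiv_funpow_eq_0[of p "Suc d"] deg by (simp add: lessThan_Suc_atMost[symmetric])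
  also have "\<dots> = (\<Sum>k=1..d. poly ((pderiv ^^ k) p) z * h ^ (k - 1) / fact (k - 1))"
  proof (cases d)
    case (Suc e)
    show ?thesis
      unfolding Suc One_nat_def sum.shift_bounds_cl_Suc_ivl by (simp add: atLeast0AtMost lessThan_Suc_atMost)
  qed simp
  finally show ?thesis .
qed

lemma poly_nuij_pert_t_coeff:
  fixes p :: "real poly"
  assumes deg: "degree p \<le> d"
    and a: "\<forall>i\<in>{1..d}. a i = t_coeff \<alpha> \<beta> i"
  shows "poly (nuij_pert d a p s) z = poly p (z + s*(\<alpha>-\<beta>)) + s*\<beta> * poly (pderiv p) (z + s*(\<alpha>-\<beta>))"
proof -
  define h where "h = s * (\<alpha> - \<beta>)"
  define P where "P k = poly ((pderiv ^^ k) p) z" for k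
  have coeff: "a k * s ^ k = h ^ k / fact k + s * \<beta> * (h ^ (k - 1) / fact (k - 1))" if k: "k \<in> {1..d}" for k
  proof -
    obtain m where "k = Suc m" using k by (cases k) auto
    then show ?thesis
      using a k t_coeff_Suc_mult_power[of \<alpha> \<beta> m s] by (simp add: h_def)
  qed
  have "(\<Sum>k=1..d. a k * s ^ k * P k)
      = (\<Sum>k=1..d. P k * h ^ k / fact k + s * \<beta> * (P k * h ^ (k - 1) / fact (k - 1)))"
    by (intro sum.cong refl) (simp only: coeff; simp add: algebra_simps)
  then have "(\<Sum>k=1..d. a k * s ^ k * P k)
      = (\<Sum>k=1..d. P k * h ^ k / fact k) + s * \<beta> * (\<Sum>k=1..d. P k * h ^ (k - 1) / fact (k - 1))"
    by (simp add: sum.distrib sum_distrib_left)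
  moreover have "P 0 + (\<Sum>k=1..d. P k * h ^ k / fact k) = poly p (z + h)"
    unfolding poly_taylor[OF deg] P_def by (simp add: atMost_atLeast0 sum.atLeast_Suc_atMost)
  moreover have "poly (nuij_pert d a p s) z = P 0 + (\<Sum>k=1..d. a k * s ^ k * P k)"
    by (simp add: nuij_pert_def poly_sum P_def)
  ultimately show ?thesis
    using poly_pderiv_taylor[OF deg, of z h] by (simp add: h_def P_def)
qed

lemma nuij_pert_t_coeff:
  fixes p :: "real poly"
  assumes "degree p \<le> d"
    and "\<forall>i\<in>{1..d}. a i = t_coeff \<alpha> \<beta> i"
  shows "nuij_pert d a p s = pcompose p [:s*(\<alpha>-\<beta>), 1:] + smult (s*\<beta>) (pcompose (pderiv p) [:s*(\<alpha>-\<beta>), 1:])"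
  by (rule poly_eq_poly_eq_iff[THEN iffD1], rule ext)
     (simp add: poly_nuij_pert_t_coeff[OF assms] poly_pcompose algebra_simps)

section \<open>Hyperbolicity of \<open>p(z + h) + c p'(z + h)\<close>\<close>

lemma poly_pderiv_prod_linear:
  fixes as :: "complex list"
  shows "poly (\<Prod>a\<leftarrow>as. [:-a,1:]) u \<noteq> 0 \<Longrightarrow>
    poly (pderiv (\<Prod>a\<leftarrow>as. [:-a,1:])) u = poly (\<Prod>a\<leftarrow>as. [:-a,1:]) u * (\<Sum>a\<leftarrow>as. 1/(u - a))"
proof (induction as)
  case Nil
  then show ?case by simp
next
  case (Cons a as)
  let ?Q = "\<Prod>a\<leftarrow>as. [:-a,1:]"
  have ua: "u - a \<noteq> 0" and Q: "poly ?Q u \<noteq> 0" using Cons.prems by auto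
  have "pderiv [:-a,1:] = (1 :: complex poly)" by (simp add: pderiv_pCons)
  then have e: "pderiv ([:-a,1:] * ?Q) = [:-a,1:] * pderiv ?Q + ?Q"
    by (simp only: pderiv_mult mult_1_right)
  have "poly (pderiv (\<Prod>a\<leftarrow>a # as. [:-a,1:])) u = (u - a) * poly (pderiv ?Q) u + poly ?Q u"
    unfolding prod_list.Cons list.map e poly_add poly_mult by simp
  also have "\<dots> = (u - a) * poly ?Q u * (1/(u - a) + (\<Sum>a\<leftarrow>as. 1/(u - a)))"
    using Cons.IH[OF Q] ua by (simp add: field_simps)
  finally show ?case by (simp add: algebra_simps)
qed

lemma Im_inverse_sub_real_sign:
  fixes a u :: complex
  assumes "Im a = 0" "Im u \<noteq> 0"
  shows "Im (1/(u - a)) * Im u < 0"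
proof -
  have D: "(Re (u-a))\<^sup>2 + (Im u)\<^sup>2 > 0" using assms by (simp add: add_nonneg_pos)
  have "Im (1/(u-a)) * Im u = - ((Im u)\<^sup>2 / ((Re (u-a))\<^sup>2 + (Im u)\<^sup>2))"
    using assms by (simp add: inverse_eq_divide[symmetric] power2_eq_square)
  moreover have "(Im u)\<^sup>2 / ((Re (u-a))\<^sup>2 + (Im u)\<^sup>2) > 0"
    using D assms by simp
  ultimately show ?thesis by linarith
qed

lemma Im_sum_inverse_sub_real_sign:
  fixes as :: "complex list"
  assumes "\<forall>a\<in>set as. Im a = 0" "Im u \<noteq> 0" "as \<noteq> []"
  shows "Im (\<Sum>a\<leftarrow>as. 1/(u - a)) * Im u < 0"
  using assms
proof (induction as)
  case (Cons a as)
  then have t: "Im (1/(u - a)) * Im u < 0" by (simp add: Im_inverse_sub_real_sign)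
  show ?case
  proof (cases "as = []")
    case False
    then have "Im (\<Sum>a\<leftarrow>as. 1/(u - a)) * Im u < 0" using Cons by auto
    then show ?thesis using t by (simp add: distrib_right)
  qed (use t in simp)
qed simp

lemma hyperbolic_nonzero: "hyperbolic p \<Longrightarrow> p \<noteq> 0"
  unfolding hyperbolic_def
proof
  assume "\<forall>z. poly (map_poly complex_of_real p) z = 0 \<longrightarrow> z \<in> \<real>" "p = 0"
  then have "\<i> \<in> \<real>" by auto
  then show False by (simp add: complex_is_Real_iff)
qed

lemma poly_add_pderiv_nonzero_off_real:
  fixes P :: "complex poly"
  assumes P: "P \<noteq> 0" and roots: "\<And>x. poly P x = 0 \<Longrightarrow> x \<in> \<real>" and u: "Im u \<noteq> 0"
  shows "poly P u + of_real c * poly (pderiv P) u \<noteq> 0"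
proof
  assume eq: "poly P u + of_real c * poly (pderiv P) u = 0"
  obtain as where PQ: "P = smult (lead_coeff P) (\<Prod>a\<leftarrow>as. [:- a, 1:])"
    using fundamental_theorem_algebra_factorized[of P] by metis
  define Q where "Q = (\<Prod>a\<leftarrow>as. [:- a, 1:])"
  have real_roots: "\<forall>a\<in>set as. Im a = 0"
  proof
    fix a assume "a \<in> set as"
    then have "poly P a = 0" by (subst PQ) (induction as, auto)
    then show "Im a = 0" using roots complex_is_Real_iff by blast
  qed
  have "poly P u \<noteq> 0" using roots u complex_is_Real_iff by blast
  then have Qu: "poly Q u \<noteq> 0" by (subst (asm) PQ) (simp add: Q_def)
  define S where "S = (\<Sum>a\<leftarrow>as. 1/(u - a))"
  \<comment> \<open>dividing by \<open>P(u)\<close> turns the equation into \<open>1 + c (P'/P)(u) = 0\<close>\<close>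
  have "lead_coeff P * poly Q u * (1 + of_real c * S) = 0"
    using eq poly_pderiv_prod_linear[OF Qu[unfolded Q_def]] unfolding S_def Q_def
    by (subst (asm) (1 2) PQ) (simp add: algebra_simps pderiv_smult)
  then have S1: "1 + of_real c * S = 0" using P Qu by simp
  then have "as \<noteq> []" by (auto simp: S_def)
  then have "Im S * Im u < 0" unfolding S_def by (rule Im_sum_inverse_sub_real_sign[OF real_roots u])
  moreover have "c * Im S = 0" using arg_cong[OF S1, of Im] by simp
  moreover have "c \<noteq> 0" using S1 by auto
  ultimately show False by simp
qed

lemma hyperbolic_shift_add_pderiv:
  fixes p :: "real poly"
  assumes hyp: "hyperbolic p"
  shows "hyperbolic (pcompose p [:h,1:] + smult c (pcompose (pderiv p) [:h,1:]))"
  unfolding hyperbolic_def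
proof (intro allI impI)
  fix w :: complex
  define P where "P = map_poly complex_of_real p"
  assume "poly (map_poly complex_of_real (pcompose p [:h,1:] + smult c (pcompose (pderiv p) [:h,1:]))) w = 0"
  then have "poly P (w + of_real h) + of_real c * poly (pderiv P) (w + of_real h) = 0"
    by (simp add: of_real_hom.map_poly_hom_add of_real_hom.map_poly_hom_smult
        of_real_hom.map_poly_pcompose of_real_hom.map_poly_pderiv[symmetric] poly_pcompose P_def
        algebra_simps)
  moreover have "P \<noteq> 0" using hyperbolic_nonzero[OF hyp] by (simp add: P_def)
  moreover have "\<And>x. poly P x = 0 \<Longrightarrow> x \<in> \<real>" using hyp unfolding hyperbolic_def P_def by auto
  ultimately have "Im (w + of_real h) = 0"
    using poly_add_pderiv_nonzero_off_real by blast
  then show "w \<in> \<real>" by (simp add: complex_is_Real_iff)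
qed

lemma nuij_seq_t_coeff:
  assumes "\<forall>i\<in>{1..d}. a i = t_coeff \<alpha> \<beta> i"
  shows "nuij_seq d a"
  unfolding nuij_seq_def
proof (intro allI impI)
  fix p :: "real poly" and s :: real
  assume "degree p = d \<and> hyperbolic p"
  then show "hyperbolic (nuij_pert d a p s)"
    using nuij_pert_t_coeff[OF _ assms] hyperbolic_shift_add_pderiv by simp
qed

definition det_rep_matrix :: "nat \<Rightarrow> (nat \<Rightarrow> real) \<Rightarrow> real mat \<Rightarrow> bool" where
  "det_rep_matrix d a A \<longleftrightarrow> A \<in> carrier_mat d d \<and>
     (\<forall>lam z s. poly (nuij_pert d a (\<Prod>i<d. [:lam i, 1:]) s) z =
        det (z \<cdot>\<^sub>m 1\<^sub>m d + mat d d (\<lambda>(i,j). if i = j then lam i else 0) + s \<cdot>\<^sub>m A))"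

lemma univ_det_rep_iff: "univ_det_rep d a \<longleftrightarrow> (\<exists>A. det_rep_matrix d a A \<and> transpose_mat A = A)"
  by (auto simp: univ_det_rep_def det_rep_matrix_def)

lemma degree_prod_linear_le: "degree (\<Prod>i<d. [:lam i, 1::real:]) \<le> d"
  using degree_prod_sum_le[of "{..<d}" "\<lambda>i. [:lam i, 1::real:]"] by (simp add: o_def)

lemma det_rep_matrix_diag_offdiag_mat:
  assumes a: "\<forall>i\<in>{1..d}. a i = t_coeff \<alpha> \<beta> i"
  shows "det_rep_matrix d a (diag_offdiag_mat d \<alpha> \<beta>)"
  unfolding det_rep_matrix_def
proof (intro conjI allI)
  show "diag_offdiag_mat d \<alpha> \<beta> \<in> carrier_mat d d" by (simp add: diag_offdiag_mat_def)
  fix lam :: "nat \<Rightarrow> real" and z s :: real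
  define h where "h = s * (\<alpha> - \<beta>)"
  have "poly (nuij_pert d a (\<Prod>i<d. [:lam i, 1:]) s) z
      = (\<Prod>i<d. lam i + (z + h)) + s * \<beta> * (\<Sum>i<d. \<Prod>j\<in>{..<d}-{i}. lam j + (z + h))"
    unfolding poly_nuij_pert_t_coeff[OF degree_prod_linear_le a] h_def
    by (simp add: poly_prod pderiv_prod pderiv_pCons poly_sum)
  also have "\<dots> = det (mat d d (\<lambda>(i,j). (if i = j then z + lam i + h else 0) + s * \<beta>))"
    by (subst det_diag_plus_const) (simp add: algebra_simps)
  also have "mat d d (\<lambda>(i,j). (if i = j then z + lam i + h else 0) + s * \<beta>)
     = z \<cdot>\<^sub>m 1\<^sub>m d + mat d d (\<lambda>(i, j). if i = j then lam i else 0) + s \<cdot>\<^sub>m diag_offdiag_mat d \<alpha> \<beta>"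
    by (rule eq_matI) (auto simp: diag_offdiag_mat_def h_def algebra_simps)
  finally show "poly (nuij_pert d a (\<Prod>i<d. [:lam i, 1:]) s) z =
      det (z \<cdot>\<^sub>m 1\<^sub>m d + mat d d (\<lambda>(i, j). if i = j then lam i else 0) + s \<cdot>\<^sub>m diag_offdiag_mat d \<alpha> \<beta>)" .
qed

lemma univ_det_rep_t_coeff:
  assumes "\<forall>i\<in>{1..d}. a i = t_coeff \<alpha> \<beta> i"
  shows "univ_det_rep d a"
proof -
  have "transpose_mat (diag_offdiag_mat d \<alpha> \<beta>) = diag_offdiag_mat d \<alpha> \<beta>"
    by (rule eq_matI) (auto simp: diag_offdiag_mat_def)
  then show ?thesis
    using det_rep_matrix_diag_offdiag_mat[OF assms] by (auto simp: univ_det_rep_iff)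
qed

section \<open>Principal minors of a representing matrix\<close>

lemma det_rep_matrix_permute:
  assumes rep: "det_rep_matrix d a A" and p: "\<pi> permutes {0..<d}"
  shows "det_rep_matrix d a (mat d d (\<lambda>(i,j). A $$ (\<pi> i, \<pi> j)))"
  unfolding det_rep_matrix_def
proof (intro conjI allI)
  fix lam :: "nat \<Rightarrow> real" and z s :: real
  have AC: "A \<in> carrier_mat d d" using rep by (simp add: det_rep_matrix_def)
  \<comment> \<open>conjugating by \<open>\<pi>\<close> permutes the roots \<open>-\<lambda>\<^sub>i\<close>, which does not change the product\<close>
  define mu where "mu i = lam (inv_into UNIV \<pi> i)" for i
  define D where "D z s = z \<cdot>\<^sub>m 1\<^sub>m d + mat d d (\<lambda>(i,j). if i = j then mu i else 0) + s \<cdot>\<^sub>m A" for z s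
  have "(\<Prod>i<d. [:lam i, 1:]) = (\<Prod>i<d. [:mu i, 1:])"
    unfolding lessThan_atLeast0 mu_def using prod.permute[OF permutes_inv[OF p], of "\<lambda>i. [:lam i, 1:]"]
    by (simp add: o_def)
  then have "poly (nuij_pert d a (\<Prod>i<d. [:lam i, 1:]) s) z = det (D z s)"
    using rep by (simp add: det_rep_matrix_def D_def)
  also have "\<dots> = det (mat d d (\<lambda>(i,j). D z s $$ (\<pi> i, \<pi> j)))"
    by (rule det_mat_permute_rows_cols[symmetric, OF _ p]) (use AC in \<open>auto simp: D_def\<close>)
  also have "mat d d (\<lambda>(i,j). D z s $$ (\<pi> i, \<pi> j))
     = z \<cdot>\<^sub>m 1\<^sub>m d + mat d d (\<lambda>(i,j). if i = j then lam i else 0) + s \<cdot>\<^sub>m mat d d (\<lambda>(i,j). A $$ (\<pi> i, \<pi> j))"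
  proof (rule eq_matI)
    fix i j assume "i < dim_row (z \<cdot>\<^sub>m 1\<^sub>m d + mat d d (\<lambda>(i,j). if i = j then lam i else 0) + s \<cdot>\<^sub>m mat d d (\<lambda>(i,j). A $$ (\<pi> i, \<pi> j)))"
       "j < dim_col (z \<cdot>\<^sub>m 1\<^sub>m d + mat d d (\<lambda>(i,j). if i = j then lam i else 0) + s \<cdot>\<^sub>m mat d d (\<lambda>(i,j). A $$ (\<pi> i, \<pi> j)))"
    then have ij: "i < d" "j < d" by auto
    have "\<pi> i < d" "\<pi> j < d" using ij p permutes_in_image by fastforce+
    moreover have "(\<pi> i = \<pi> j) = (i = j)" using p permutes_inj by (metis injD)
    moreover have "mu (\<pi> i) = lam i" unfolding mu_def using p permutes_inverses(2) by metis
    ultimately show "mat d d (\<lambda>(i,j). D z s $$ (\<pi> i, \<pi> j)) $$ (i, j) =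
      (z \<cdot>\<^sub>m 1\<^sub>m d + mat d d (\<lambda>(i,j). if i = j then lam i else 0) + s \<cdot>\<^sub>m mat d d (\<lambda>(i,j). A $$ (\<pi> i, \<pi> j))) $$ (i, j)"
      using ij AC by (auto simp: D_def)
  qed auto
  finally show "poly (nuij_pert d a (\<Prod>i<d. [:lam i, 1:]) s) z =
      det (z \<cdot>\<^sub>m 1\<^sub>m d + mat d d (\<lambda>(i,j). if i = j then lam i else 0) + s \<cdot>\<^sub>m mat d d (\<lambda>(i,j). A $$ (\<pi> i, \<pi> j)))" .
qed simp

lemma coeff_prod_zeros_ones:
  assumes "k \<le> d"
  shows "coeff (\<Prod>i<d. [:if i < k then 0 else 1, 1::real:]) j = (if j < k then 0 else coeff ([:1,1:] ^ (d - k)) (j - k))"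
proof -
  have "(\<Prod>i<d. [:if i < k then 0 else 1, 1::real:])
      = (\<Prod>i\<in>{0..<k}. [:if i < k then 0 else 1, 1:]) * (\<Prod>i\<in>{k..<d}. [:if i < k then 0 else 1, 1:])"
    unfolding lessThan_atLeast0 by (rule prod.atLeastLessThan_concat[symmetric]) (use assms in auto)
  also have "(\<Prod>i\<in>{0..<k}. [:if i < k then 0 else 1, 1::real:]) = monom 1 k"
    by (subst prod.cong[OF refl, of _ _ "\<lambda>_. [:0,1:]"]) (auto simp: monom_altdef)
  also have "(\<Prod>i\<in>{k..<d}. [:if i < k then 0 else 1, 1::real:]) = [:1,1:] ^ (d - k)"
    by (subst prod.cong[OF refl, of _ _ "\<lambda>_. [:1,1:]"]) auto
  finally show ?thesis by (simp add: coeff_monom_mult)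
qed

text \<open>For \<open>\<lambda> = (0,\<dots>,0,1,\<dots>,1)\<close> with \<open>k\<close> zeros, \<open>det (D + sA)\<close> is \<open>s\<^sup>k\<close> times the determinant of the
  matrix below, while \<open>p\<^sub>a(0,s)\<close> is \<open>s\<^sup>k\<close> times a polynomial in \<open>s\<close> with constant term \<open>k! a\<^sub>k\<close>.\<close>

lemma det_rep_matrix_scaled_rows:
  assumes rep: "det_rep_matrix d a A" and k: "1 \<le> k" "k \<le> d" and s: "s \<noteq> 0"
  shows "det (mat d d (\<lambda>(i,j). (if i < k then A $$ (i,j) else of_bool (i = j)) + s * (if i < k then 0 else A $$ (i,j))))
       = (\<Sum>j=k..d. a j * fact j * coeff ([:1,1:] ^ (d - k)) (j - k) * s ^ (j - k))"
    (is "det ?B = ?F")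
proof -
  have AC: "A \<in> carrier_mat d d" and idt: "\<And>lam z s. poly (nuij_pert d a (\<Prod>i<d. [:lam i, 1:]) s) z
      = det (z \<cdot>\<^sub>m 1\<^sub>m d + mat d d (\<lambda>(i,j). if i = j then lam i else 0) + s \<cdot>\<^sub>m A)"
    using rep by (simp_all add: det_rep_matrix_def)
  define p where "p = (\<Prod>i<d. [:if i < k then 0 else 1, 1::real:])"
  have "poly (nuij_pert d a p s) 0
      = det (0 \<cdot>\<^sub>m 1\<^sub>m d + mat d d (\<lambda>(i,j). if i = j then if i < k then 0 else 1 else 0) + s \<cdot>\<^sub>m A)"
    unfolding p_def by (rule idt)
  also have "0 \<cdot>\<^sub>m 1\<^sub>m d + mat d d (\<lambda>(i,j). if i = j then if i < k then 0 else 1 else 0) + s \<cdot>\<^sub>m A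
      = mat\<^sub>r d d (\<lambda>i. (if i < k then s else 1) \<cdot>\<^sub>v row ?B i)"
    by (rule eq_matI) (use AC in auto)
  also have "det \<dots> = prod (\<lambda>i. if i < k then s else 1) {0..<d} * det (mat\<^sub>r d d (\<lambda>i. row ?B i))"
    by (rule det_rows_mul) auto
  also have "mat\<^sub>r d d (\<lambda>i. row ?B i) = ?B" by (rule eq_matI) auto
  also have "prod (\<lambda>i. if i < k then s else 1) {0..<d} = s ^ k"
    using prod.atLeastLessThan_concat[of 0 k d "\<lambda>i. if i < k then s else 1"] k by simp
  finally have lhs: "poly (nuij_pert d a p s) 0 = s ^ k * det ?B" .
  have "poly (nuij_pert d a p s) 0 = (\<Sum>j=1..d. a j * s ^ j * (fact j * coeff p j))"
    using k by (simp add: poly_nuij_pert_0 p_def coeff_prod_zeros_ones)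
  also have "\<dots> = (\<Sum>j=k..d. a j * s ^ j * (fact j * coeff ([:1,1:] ^ (d - k)) (j - k)))"
    using k by (intro sum.mono_neutral_cong_right) (auto simp: p_def coeff_prod_zeros_ones)
  also have "\<dots> = s ^ k * ?F"
    unfolding sum_distrib_left
  proof (rule sum.cong[OF refl])
    fix j assume "j \<in> {k..d}"
    then have "s ^ j = s ^ k * s ^ (j - k)" by (simp add: power_add[symmetric])
    then show "a j * s ^ j * (fact j * coeff ([:1,1:] ^ (d - k)) (j - k))
        = s ^ k * (a j * fact j * coeff ([:1,1:] ^ (d - k)) (j - k) * s ^ (j - k))"
      by simp
  qed
  finally show ?thesis using lhs s by simp
qed

lemma continuous_at_eq_if_eq_off:
  fixes f g :: "real \<Rightarrow> real"
  assumes "continuous (at x) f" "continuous (at x) g" "\<And>y. y \<noteq> x \<Longrightarrow> f y = g y"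
  shows "f x = g x"
proof -
  have "eventually (\<lambda>y. g y = f y) (at x)"
    unfolding eventually_at by (rule exI[of _ 1]) (auto simp: assms(3))
  moreover have "(g \<longlongrightarrow> g x) (at x)" using assms(2) by (simp add: continuous_at)
  ultimately have "(f \<longlongrightarrow> g x) (at x)"
    using tendsto_cong by fastforce
  then show ?thesis
    using assms(1) tendsto_unique[OF at_neq_bot] by (simp add: continuous_at)
qed

lemma det_unit_lower_rows:
  fixes A :: "'a::idom mat"
  assumes "A \<in> carrier_mat d d" "k \<le> d"
  shows "det (mat d d (\<lambda>(i,j). if i < k then A $$ (i,j) else of_bool (i = j)))
       = det (mat k k (\<lambda>(i,j). A $$ (i,j)))"
proof -
  define A11 where "A11 = mat k k (\<lambda>(i,j). A $$ (i,j))"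
  define A12 where "A12 = mat k (d-k) (\<lambda>(i,j). A $$ (i, k + j))"
  have "mat d d (\<lambda>(i,j). if i < k then A $$ (i,j) else of_bool (i = j))
      = four_block_mat A11 A12 (0\<^sub>m (d-k) k) (1\<^sub>m (d-k))"
    by (rule eq_matI) (use assms in \<open>auto simp: A11_def A12_def\<close>)
  moreover have "det (four_block_mat A11 A12 (0\<^sub>m (d-k) k) (1\<^sub>m (d-k))) = det A11"
    using det_four_block_mat_lower_left_zero[of A11 k A12 "d-k"] by (simp add: A11_def A12_def)
  ultimately show ?thesis by (simp add: A11_def)
qed

lemma det_rep_matrix_leading_minor:
  assumes rep: "det_rep_matrix d a A" and k: "1 \<le> k" "k \<le> d"
  shows "det (mat k k (\<lambda>(i,j). A $$ (i,j))) = a k * fact k"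
proof -
  have AC: "A \<in> carrier_mat d d" using rep by (simp add: det_rep_matrix_def)
  define B where "B s = mat d d (\<lambda>(i,j). (if i < k then A $$ (i,j) else of_bool (i = j)) + s * (if i < k then 0 else A $$ (i,j)))" for s
  define F where "F s = (\<Sum>j=k..d. a j * fact j * coeff ([:1,1:] ^ (d - k)) (j - k) * s ^ (j - k))" for s
  have "continuous (at 0) (\<lambda>s. det (B s))"
    unfolding B_def det_mat_eq_sum_permutes case_prod_conv by (intro continuous_intros)
  moreover have "continuous (at 0) F"
    unfolding F_def by (intro continuous_intros)
  ultimately have "det (B 0) = F 0"
    by (rule continuous_at_eq_if_eq_off) (use det_rep_matrix_scaled_rows[OF rep k] in \<open>simp add: B_def F_def\<close>)
  also have "F 0 = a k * fact k"
  proof -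
    have "(\<Sum>j=Suc k..d. a j * fact j * coeff ([:1,1:] ^ (d - k)) (j - k) * (0::real) ^ (j - k)) = 0"
      by (rule sum.neutral) auto
    then show ?thesis
      using k by (simp add: F_def sum.atLeast_Suc_atMost poly_0_coeff_0[symmetric])
  qed
  also have "det (B 0) = det (mat k k (\<lambda>(i,j). A $$ (i,j)))"
    using det_unit_lower_rows[OF AC k(2)] by (simp add: B_def)
  finally show ?thesis .
qed

lemma permutes_extending_inj_on:
  fixes f :: "nat \<Rightarrow> nat"
  assumes inj: "inj_on f {0..<k}" and into: "f ` {0..<k} \<subseteq> {0..<d}"
  obtains \<pi> where "\<pi> permutes {0..<d}" "\<And>i. i < k \<Longrightarrow> \<pi> i = f i"
proof -
  have kd: "k \<le> d" using card_inj_on_le[OF inj into] by simp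
  have "card {k..<d} = card ({0..<d} - f ` {0..<k})"
    using card_image[OF inj] into by (simp add: card_Diff_subset)
  then obtain g where g: "bij_betw g {k..<d} ({0..<d} - f ` {0..<k})"
    using finite_same_card_bij by blast
  define \<pi> where "\<pi> i = (if i < k then f i else if i < d then g i else i)" for i
  have "bij_betw \<pi> {0..<k} (f ` {0..<k})"
    using inj_on_imp_bij_betw[OF inj] by (rule bij_betw_cong[THEN iffD1, rotated]) (simp add: \<pi>_def)
  moreover have "bij_betw \<pi> {k..<d} ({0..<d} - f ` {0..<k})"
    using g by (rule bij_betw_cong[THEN iffD1, rotated]) (simp add: \<pi>_def)
  ultimately have "bij_betw \<pi> ({0..<k} \<union> {k..<d}) (f ` {0..<k} \<union> ({0..<d} - f ` {0..<k}))"
    by (rule bij_betw_combine) blast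
  moreover have "{0..<k} \<union> {k..<d} = {0..<d}" "f ` {0..<k} \<union> ({0..<d} - f ` {0..<k}) = {0..<d}"
    using kd into by auto
  ultimately have "\<pi> permutes {0..<d}"
    by (intro bij_imp_permutes) (auto simp: \<pi>_def)
  then show thesis using that by (simp add: \<pi>_def)
qed

lemma det_rep_matrix_principal_minor:
  assumes rep: "det_rep_matrix d a A" and f: "inj_on f {0..<k}" "f ` {0..<k} \<subseteq> {0..<d}" and "1 \<le> k"
  shows "det (mat k k (\<lambda>(i,j). A $$ (f i, f j))) = a k * fact k"
proof -
  obtain \<pi> where \<pi>: "\<pi> permutes {0..<d}" "\<And>i. i < k \<Longrightarrow> \<pi> i = f i"
    using permutes_extending_inj_on[OF f] by blast
  have "k \<le> d" using card_inj_on_le[OF f] by simp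
  then have "det (mat k k (\<lambda>(i,j). mat d d (\<lambda>(i,j). A $$ (\<pi> i, \<pi> j)) $$ (i,j))) = a k * fact k"
    using \<open>1 \<le> k\<close> by (intro det_rep_matrix_leading_minor[OF det_rep_matrix_permute[OF rep \<pi>(1)]])
  moreover have "mat k k (\<lambda>(i,j). mat d d (\<lambda>(i,j). A $$ (\<pi> i, \<pi> j)) $$ (i,j)) = mat k k (\<lambda>(i,j). A $$ (f i, f j))"
    by (rule eq_matI) (use \<pi> \<open>k \<le> d\<close> in auto)
  ultimately show ?thesis by simp
qed

section \<open>Symmetric representing matrices\<close>

lemma symmetric_mat_entry:
  assumes "transpose_mat A = A" "A \<in> carrier_mat d d" "i < d" "j < d"
  shows "A $$ (j,i) = A $$ (i,j)"
  using assms by (metis index_transpose_mat(1) carrier_matD)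

lemma det_rep_matrix_diag:
  assumes rep: "det_rep_matrix d a A" and i: "i < d"
  shows "A $$ (i,i) = a 1"
  using det_rep_matrix_principal_minor[OF rep, of "\<lambda>_. i" 1] i by (simp add: det_single)

lemma det_rep_matrix_offdiag_sq:
  assumes rep: "det_rep_matrix d a A" and sym: "transpose_mat A = A"
    and ij: "i < d" "j < d" "i \<noteq> j"
  shows "(A $$ (i,j))^2 = (a 1)^2 - 2 * a 2"
proof -
  have AC: "A \<in> carrier_mat d d" using rep by (simp add: det_rep_matrix_def)
  have "det (mat 2 2 (\<lambda>(r,s). A $$ ((\<lambda>r. if r = 0 then i else j) r, (\<lambda>r. if r = 0 then i else j) s)))
      = a 2 * fact 2"
    by (rule det_rep_matrix_principal_minor[OF rep]) (use ij in \<open>auto simp: inj_on_def\<close>)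
  then have "A $$ (i,i) * A $$ (j,j) - A $$ (i,j) * A $$ (j,i) = a 2 * 2"
    by (simp add: det_mat_2)
  then show ?thesis
    using det_rep_matrix_diag[OF rep] symmetric_mat_entry[OF sym AC, of i j] ij
    by (simp add: power2_eq_square)
qed

lemma det_rep_matrix_triangle:
  assumes rep: "det_rep_matrix d a A" and sym: "transpose_mat A = A"
    and ijl: "i < d" "j < d" "l < d" "i \<noteq> j" "j \<noteq> l" "i \<noteq> l"
  shows "A $$ (i,j) * A $$ (j,l) * A $$ (i,l) = (6 * a 3 - (a 1)^3 + 3 * a 1 * ((a 1)^2 - 2 * a 2)) / 2"
proof -
  have AC: "A \<in> carrier_mat d d" using rep by (simp add: det_rep_matrix_def)
  define f where "f (r::nat) = (if r = 0 then i else if r = 1 then j else l)" for r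
  define x y z where "x = A $$ (i,j)" and "y = A $$ (j,l)" and "z = A $$ (i,l)"
  have "det (mat 3 3 (\<lambda>(r,s). A $$ (f r, f s))) = a 3 * fact 3"
    by (rule det_rep_matrix_principal_minor[OF rep]) (use ijl in \<open>auto simp: inj_on_def f_def\<close>)
  moreover have "det (mat 3 3 (\<lambda>(r,s). A $$ (f r, f s))) = (a 1)^3 - a 1 * (x^2 + y^2 + z^2) + 2 * (x * y * z)"
  proof -
    have "A $$ (j,i) = x" "A $$ (l,j) = y" "A $$ (l,i) = z"
      using symmetric_mat_entry[OF sym AC] ijl by (auto simp: x_def y_def z_def)
    moreover have "A $$ (i,i) = a 1" "A $$ (j,j) = a 1" "A $$ (l,l) = a 1"
      using det_rep_matrix_diag[OF rep] ijl by auto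
    ultimately show ?thesis
      by (simp add: det_mat_3 f_def flip: x_def y_def z_def) (simp add: power2_eq_square power3_eq_cube algebra_simps)
  qed
  moreover have "x^2 + y^2 + z^2 = 3 * ((a 1)^2 - 2 * a 2)"
    using det_rep_matrix_offdiag_sq[OF rep sym] ijl by (simp add: x_def y_def z_def)
  ultimately have "(a 1)^3 - a 1 * (3 * ((a 1)^2 - 2 * a 2)) + 2 * (x * y * z) = a 3 * 6"
    by (simp add: fact_numeral)
  then show ?thesis unfolding x_def y_def z_def by (simp add: field_simps)
qed

text \<open>The products around triangles determine \<open>\<beta>\<close>: \<open>q\<^sup>2 = b\<^sup>3\<close>, so \<open>\<beta> = q/b\<close> squares to \<open>b\<close>;
  the signs \<open>\<sigma>\<^sub>i\<close> are read off the first row.\<close>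

lemma symmetric_sign_pattern:
  fixes M :: "nat \<Rightarrow> nat \<Rightarrow> real"
  assumes sym: "\<And>i j. i < d \<Longrightarrow> j < d \<Longrightarrow> M j i = M i j"
   and sq: "\<And>i j. i < d \<Longrightarrow> j < d \<Longrightarrow> i \<noteq> j \<Longrightarrow> (M i j)^2 = b"
   and tri: "\<And>i j l. i < d \<Longrightarrow> j < d \<Longrightarrow> l < d \<Longrightarrow> i \<noteq> j \<Longrightarrow> j \<noteq> l \<Longrightarrow> i \<noteq> l \<Longrightarrow> M i j * M j l * M i l = q"
  obtains \<sigma> \<beta> where "\<And>i. i < d \<Longrightarrow> \<sigma> i * \<sigma> i = 1"
    and "\<And>i j. i < d \<Longrightarrow> j < d \<Longrightarrow> i \<noteq> j \<Longrightarrow> M i j = \<sigma> i * \<sigma> j * \<beta>"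
proof (cases "d \<le> 2 \<or> b = 0")
  case True
  define \<beta> where "\<beta> = (if d \<le> 2 then M 0 1 else 0)"
  have "M i j = \<beta>" if "i < d" "j < d" "i \<noteq> j" for i j
  proof (cases "d \<le> 2")
    case True
    then have "(i = 0 \<and> j = 1) \<or> (i = 1 \<and> j = 0)" using that by auto
    then show ?thesis using sym[of 0 1] that True by (auto simp: \<beta>_def)
  next
    case False
    then show ?thesis using sq[OF that] \<open>d \<le> 2 \<or> b = 0\<close> by (simp add: \<beta>_def)
  qed
  then show ?thesis using that[of "\<lambda>_. 1" \<beta>] by simp
next
  case False
  then have d3: "3 \<le> d" and b: "b \<noteq> 0" by auto
  have "q = M 0 1 * M 1 2 * M 0 2" using tri[of 0 1 2] d3 by simp
  then have "q^2 = (M 0 1)^2 * (M 1 2)^2 * (M 0 2)^2" by (simp add: power_mult_distrib)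
  also have "\<dots> = b^3" using sq[of 0 1] sq[of 1 2] sq[of 0 2] d3 by (simp add: power3_eq_cube)
  finally have qq: "q^2 = b^3" .
  define \<beta> where "\<beta> = q / b"
  have bb: "\<beta>^2 = b" unfolding \<beta>_def using qq b by (simp add: power_divide power3_eq_cube power2_eq_square)
  then have b0: "\<beta> \<noteq> 0" using b by auto
  define \<sigma> where "\<sigma> i = (if i = 0 then 1 else M 0 i / \<beta>)" for i
  have M0: "M 0 i = \<sigma> i * \<beta>" if "i \<noteq> 0" for i using that b0 by (simp add: \<sigma>_def)
  have ss: "\<sigma> i * \<sigma> i = 1" if "i < d" for i
    using sq[of 0 i] that d3 bb b by (simp add: \<sigma>_def power2_eq_square[symmetric] power_divide)
  have "M i j = \<sigma> i * \<sigma> j * \<beta>" if ij: "i < d" "j < d" "i \<noteq> j" for i j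
  proof (cases "i = 0 \<or> j = 0")
    case True
    then show ?thesis using ij M0[of i] M0[of j] sym[of i j] by (auto simp: \<sigma>_def)
  next
    case False
    then have "\<sigma> i * \<sigma> j * \<beta>^2 * M i j = q" using tri[of 0 i j] ij d3 M0[of i] M0[of j]
      by (simp add: power2_eq_square algebra_simps)
    then have "\<sigma> i * \<sigma> j * (\<sigma> i * \<sigma> j) * b * M i j = \<sigma> i * \<sigma> j * q" using bb
      by (simp add: algebra_simps)
    then have "b * M i j = \<sigma> i * \<sigma> j * q" using ss[OF ij(1)] ss[OF ij(2)]
      by (simp add: algebra_simps)
    then show ?thesis using b by (simp add: \<beta>_def field_simps)
  qed
  then show ?thesis using that ss by blast
qed

lemma univ_det_rep_t_abE:
  assumes "univ_det_rep d a"
  obtains \<alpha> \<beta> where "\<And>k. k \<in> {1..d} \<Longrightarrow> a k = t_ab \<alpha> \<beta> k / fact k"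
proof -
  obtain A where rep: "det_rep_matrix d a A" and sym: "transpose_mat A = A"
    using assms by (auto simp: univ_det_rep_iff)
  have AC: "A \<in> carrier_mat d d" using rep by (simp add: det_rep_matrix_def)
  obtain \<sigma> \<beta> where ss: "\<And>i. i < d \<Longrightarrow> \<sigma> i * \<sigma> i = 1"
    and st: "\<And>i j. i < d \<Longrightarrow> j < d \<Longrightarrow> i \<noteq> j \<Longrightarrow> A $$ (i,j) = \<sigma> i * \<sigma> j * \<beta>"
    by (rule symmetric_sign_pattern[of d "\<lambda>i j. A $$ (i,j)"])
       (rule symmetric_mat_entry[OF sym AC] det_rep_matrix_offdiag_sq[OF rep sym]
          det_rep_matrix_triangle[OF rep sym] that; assumption)+
  have entry: "A $$ (i,j) = \<sigma> i * \<sigma> j * (if i = j then a 1 else \<beta>)" if "i < d" "j < d" for i j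
    using that ss[of i] st[of i j] det_rep_matrix_diag[OF rep, of i] by auto
  have "a k = t_ab (a 1) \<beta> k / fact k" if k: "k \<in> {1..d}" for k
  proof -
    have "mat k k (\<lambda>(i,j). A $$ (i,j)) = mat k k (\<lambda>(i,j). \<sigma> i * \<sigma> j * (\<lambda>(i,j). if i = j then a 1 else \<beta>) (i,j))"
      by (rule eq_matI) (use k entry in auto)
    then have "det (mat k k (\<lambda>(i,j). A $$ (i,j))) = (\<Prod>i=0..<k. \<sigma> i)^2 * t_ab (a 1) \<beta> k"
      unfolding t_ab_def by (simp only: det_mat_rescale)
    also have "(\<Prod>i=0..<k. \<sigma> i)^2 = (\<Prod>i=0..<k. \<sigma> i * \<sigma> i)"
      by (simp add: power2_eq_square prod.distrib)
    also have "\<dots> = 1"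
      using ss k by (intro prod.neutral) auto
    finally have "det (mat k k (\<lambda>(i,j). A $$ (i,j))) = t_ab (a 1) \<beta> k" by simp
    moreover have "det (mat k k (\<lambda>(i,j). A $$ (i,j))) = a k * fact k"
      using k by (intro det_rep_matrix_leading_minor[OF rep]) auto
    ultimately show ?thesis by (simp add: field_simps)
  qed
  then show thesis by (rule that)
qed

theorem theoremB:
  fixes d :: nat and a :: "nat \<Rightarrow> real"
  shows "(nuij_seq d a \<and> univ_det_rep d a) \<longleftrightarrow>
         (\<exists>\<alpha> \<beta> :: real. \<forall>i\<in>{1..d}.
            a i = t_ab \<alpha> \<beta> i / fact i \<and>
            a i = (\<alpha> - \<beta>) ^ (i - 1) * (\<alpha> + (real i - 1) * \<beta>) / fact i)"
proof
  assume "nuij_seq d a \<and> univ_det_rep d a"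
  then obtain \<alpha> \<beta> where t: "\<And>i. i \<in> {1..d} \<Longrightarrow> a i = t_ab \<alpha> \<beta> i / fact i"
    using univ_det_rep_t_abE by blast
  have "a i = t_ab \<alpha> \<beta> i / fact i \<and> a i = (\<alpha> - \<beta>) ^ (i - 1) * (\<alpha> + (real i - 1) * \<beta>) / fact i"
    if "i \<in> {1..d}" for i
    using t[OF that] t_ab_eq[of i \<alpha> \<beta>] that by simp
  then show "\<exists>\<alpha> \<beta> :: real. \<forall>i\<in>{1..d}.
      a i = t_ab \<alpha> \<beta> i / fact i \<and> a i = (\<alpha> - \<beta>) ^ (i - 1) * (\<alpha> + (real i - 1) * \<beta>) / fact i"
    by blast
next
  assume "\<exists>\<alpha> \<beta> :: real. \<forall>i\<in>{1..d}.
      a i = t_ab \<alpha> \<beta> i / fact i \<and> a i = (\<alpha> - \<beta>) ^ (i - 1) * (\<alpha> + (real i - 1) * \<beta>) / fact i"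
  then obtain \<alpha> \<beta> where "\<forall>i\<in>{1..d}. a i = t_coeff \<alpha> \<beta> i"
    by (auto simp: t_coeff_def)
  then show "nuij_seq d a \<and> univ_det_rep d a"
    using nuij_seq_t_coeff univ_det_rep_t_coeff by blast
qed

end
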